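(* Let a group $G$ act equicontinuously on a uniform space $(X,S)$, and let $T$ be an $S$-compatible topology on $X$. Let $(x_\alpha)$ be a net in $X$ converging to $x$ in the topology $T_S$, and let $(g_\alpha)$ be a net in $G$ indexed by the same directed set. Then for every $y\in X$: the net $(g_\alpha x_\alpha)$ converges to $y$ in $T$ if and only if the net $(g_\alpha x)$ converges to $y$ in $T$.
   Context: A uniform structure $S$ on a set $X$ is a filter of subsets of $X\times X$, each containing the diagonal, closed under inversion, such that for every $U\in S$ there is $U'\in S$ with $U'U'\subset U$ ($U_1U_2=\{(u_1,u_2):\exists u_3,(u_1,u_3)\in U_1,(u_3,u_2)\in U_2\}$). For $V\subset X$, $UV=\{v:\exists v'\in V,(v,v')\in U\}$. $T_S$ is the topology generated by the sets $U\{x\}$, $U\in S$, $x\in X$. A topology $T$ is $S$-compatible if for every $V\in T$ and $y\in V$ there exist $V'\in T$ with $y\in V'$ and $U\in S$ with $UV'\subset V$. The action is equicontinuous if for every $U\in S$, $\{(u,v):(gu,gv)\in U\ \forall g\in G\}\in S$. *)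

theory Defs
  imports "HOL-Analysis.Analysis" "HOL-Algebra.Group_Action"
begin

text \<open>Composition U1 U2 = {(u1,u2). \<exists>u3. (u1,u3)\<in>U1 \<and> (u3,u2)\<in>U2} is relcomp (O).\<close>
definition uniform_structure :: "'a set \<Rightarrow> ('a \<times> 'a) set set \<Rightarrow> bool" where
  "uniform_structure X S \<longleftrightarrow>
     S \<subseteq> Pow (X \<times> X) \<and>
     X \<times> X \<in> S \<and>
     (\<forall>U\<in>S. \<forall>W. U \<subseteq> W \<and> W \<subseteq> X \<times> X \<longrightarrow> W \<in> S) \<and>
     (\<forall>U\<in>S. \<forall>W\<in>S. U \<inter> W \<in> S) \<and>
     (\<forall>U\<in>S. Id_on X \<subseteq> U) \<and>
     (\<forall>U\<in>S. converse U \<in> S) \<and>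
     (\<forall>U\<in>S. \<exists>U'\<in>S. U' O U' \<subseteq> U)"

definition uapp :: "('a \<times> 'a) set \<Rightarrow> 'a set \<Rightarrow> 'a set" where
  "uapp U V = {v. \<exists>v'\<in>V. (v, v') \<in> U}"

definition uniform_topology :: "'a set \<Rightarrow> ('a \<times> 'a) set set \<Rightarrow> 'a topology" where
  "uniform_topology X S = topology_generated_by {uapp U {x} | U x. U \<in> S \<and> x \<in> X}"

definition S_compatible :: "'a set \<Rightarrow> ('a \<times> 'a) set set \<Rightarrow> 'a topology \<Rightarrow> bool" where
  "S_compatible X S T \<longleftrightarrow> topspace T = X \<and>
     (\<forall>V y. openin T V \<and> y \<in> V \<longrightarrow>
        (\<exists>V' U. openin T V' \<and> y \<in> V' \<and> U \<in> S \<and> uapp U V' \<subseteq> V))"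

definition equicontinuous_action ::
  "('g, 'b) monoid_scheme \<Rightarrow> ('g \<Rightarrow> 'a \<Rightarrow> 'a) \<Rightarrow> 'a set \<Rightarrow> ('a \<times> 'a) set set \<Rightarrow> bool" where
  "equicontinuous_action G \<phi> X S \<longleftrightarrow>
     (\<forall>U\<in>S. {(u, v) \<in> X \<times> X. \<forall>g\<in>carrier G. (\<phi> g u, \<phi> g v) \<in> U} \<in> S)"

definition directed_set :: "'i set \<Rightarrow> ('i \<Rightarrow> 'i \<Rightarrow> bool) \<Rightarrow> bool" where
  "directed_set D leq \<longleftrightarrow> D \<noteq> {} \<and>
     (\<forall>a\<in>D. leq a a) \<and>
     (\<forall>a\<in>D. \<forall>b\<in>D. \<forall>c\<in>D. leq a b \<and> leq b c \<longrightarrow> leq a c) \<and>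
     (\<forall>a\<in>D. \<forall>b\<in>D. \<exists>c\<in>D. leq a c \<and> leq b c)"

definition net_converges :: "'a topology \<Rightarrow> 'i set \<Rightarrow> ('i \<Rightarrow> 'i \<Rightarrow> bool) \<Rightarrow> ('i \<Rightarrow> 'a) \<Rightarrow> 'a \<Rightarrow> bool" where
  "net_converges T D leq x y \<longleftrightarrow> y \<in> topspace T \<and>
     (\<forall>V. openin T V \<and> y \<in> V \<longrightarrow> (\<exists>a\<in>D. \<forall>b\<in>D. leq a b \<longrightarrow> x b \<in> V))"

end

theory Submission
  imports Defs
begin

text \<open>
  Call two nets u, v on the same directed set S-asymptotic
  if for every entourage U \<in> S eventually (u a, v a) \<in> U.  The argument has
  three independent ingredients:
  - convergence x_\<alpha> \<rightarrow> x in T_S makes (x_\<alpha>) and the constant net x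
    S-asymptotic, in both orders since S is closed under inversion;
  - an equicontinuous action preserves S-asymptoticity when both nets are
    moved by the same group elements g_\<alpha>;
  - for an S-compatible topology T, a net S-asymptotic to a T-convergent
    net converges to the same limit: if V is a T-neighbourhood of y, pick
    y \<in> V' and U \<in> S with U V' \<subseteq> V; eventually v_\<alpha> \<in> V' and
    (u_\<alpha>, v_\<alpha>) \<in> U, hence u_\<alpha> \<in> V.
  Applying these to (g_\<alpha> x_\<alpha>) and (g_\<alpha> x) in both orders gives the theorem.
\<close>

definition eventually_net :: "'i set \<Rightarrow> ('i \<Rightarrow> 'i \<Rightarrow> bool) \<Rightarrow> ('i \<Rightarrow> bool) \<Rightarrow> bool" where
  "eventually_net D leq P \<longleftrightarrow> (\<exists>a\<in>D. \<forall>b\<in>D. leq a b \<longrightarrow> P b)"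

lemma net_converges_iff_eventually:
  "net_converges T D leq u y \<longleftrightarrow>
     y \<in> topspace T \<and> (\<forall>V. openin T V \<and> y \<in> V \<longrightarrow> eventually_net D leq (\<lambda>b. u b \<in> V))"
  unfolding net_converges_def eventually_net_def by simp

lemma eventually_net_mono:
  assumes "eventually_net D leq P" and "\<And>b. b \<in> D \<Longrightarrow> P b \<Longrightarrow> Q b"
  shows "eventually_net D leq Q"
  using assms unfolding eventually_net_def by blast

text \<open>In a directed set two eventual properties hold eventually together:
  beyond a common upper bound of the two thresholds.\<close>
lemma eventually_net_conj:
  assumes dir: "directed_set D leq"
    and P: "eventually_net D leq P" and Q: "eventually_net D leq Q"
  shows "eventually_net D leq (\<lambda>b. P b \<and> Q b)"
proof -
  obtain a1 where a1: "a1 \<in> D" "\<forall>b\<in>D. leq a1 b \<longrightarrow> P b"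
    using P unfolding eventually_net_def by blast
  obtain a2 where a2: "a2 \<in> D" "\<forall>b\<in>D. leq a2 b \<longrightarrow> Q b"
    using Q unfolding eventually_net_def by blast
  obtain c where c: "c \<in> D" "leq a1 c" "leq a2 c"
    using dir a1(1) a2(1) unfolding directed_set_def by blast
  have trans: "\<forall>a\<in>D. \<forall>b\<in>D. \<forall>c\<in>D. leq a b \<and> leq b c \<longrightarrow> leq a c"
    using dir unfolding directed_set_def by blast
  have "leq a1 b \<and> leq a2 b" if "b \<in> D" "leq c b" for b
    using trans a1(1) a2(1) c that by meson
  then show ?thesis
    using a1(2) a2(2) c(1) unfolding eventually_net_def by blast
qed

lemma uniform_structure_subset:
  assumes "uniform_structure X S" and "U \<in> S"
  shows "U \<subseteq> X \<times> X"
proof -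
  have "S \<subseteq> Pow (X \<times> X)" using assms(1) unfolding uniform_structure_def by (elim conjE)
  then show ?thesis using assms(2) by blast
qed

lemma uniform_structure_refl:
  "uniform_structure X S \<Longrightarrow> U \<in> S \<Longrightarrow> Id_on X \<subseteq> U"
  unfolding uniform_structure_def by (elim conjE, drule bspec)

lemma uniform_structure_converse:
  "uniform_structure X S \<Longrightarrow> U \<in> S \<Longrightarrow> converse U \<in> S"
  unfolding uniform_structure_def by (elim conjE, drule bspec)

definition asymptotic_nets ::
  "('a \<times> 'a) set set \<Rightarrow> 'i set \<Rightarrow> ('i \<Rightarrow> 'i \<Rightarrow> bool) \<Rightarrow> ('i \<Rightarrow> 'a) \<Rightarrow> ('i \<Rightarrow> 'a) \<Rightarrow> bool" where
  "asymptotic_nets S D leq u v \<longleftrightarrow> (\<forall>U\<in>S. eventually_net D leq (\<lambda>b. (u b, v b) \<in> U))"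

text \<open>S-asymptoticity is symmetric because entourages are closed under inversion.\<close>
lemma asymptotic_nets_sym:
  assumes "uniform_structure X S" and "asymptotic_nets S D leq u v"
  shows "asymptotic_nets S D leq v u"
  unfolding asymptotic_nets_def
proof
  fix U assume "U \<in> S"
  then have "converse U \<in> S" by (rule uniform_structure_converse[OF assms(1)])
  then have "eventually_net D leq (\<lambda>b. (u b, v b) \<in> converse U)"
    using assms(2) unfolding asymptotic_nets_def by blast
  then show "eventually_net D leq (\<lambda>b. (v b, u b) \<in> U)" by simp
qed

text \<open>A net converging to x in T_S is S-asymptotic to the constant net x,
  since each U{x} with U \<in> S is a T_S-open neighbourhood of x.\<close>
lemma uniform_topology_convergence_asymptotic:
  assumes us: "uniform_structure X S"
    and conv: "net_converges (uniform_topology X S) D leq u x"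
  shows "asymptotic_nets S D leq u (\<lambda>_. x)"
  unfolding asymptotic_nets_def
proof
  fix U assume U: "U \<in> S"
  have "x \<in> topspace (uniform_topology X S)" using conv unfolding net_converges_def by simp
  then have "x \<in> \<Union>{uapp U {x} | U x. U \<in> S \<and> x \<in> X}"
    unfolding uniform_topology_def topology_generated_by_topspace .
  then obtain U0 z where "U0 \<in> S" "(x, z) \<in> U0" by (auto simp: uapp_def)
  then have xX: "x \<in> X" using uniform_structure_subset[OF us] by blast
  have "openin (uniform_topology X S) (uapp U {x})"
    unfolding uniform_topology_def
    by (rule topology_generated_by_Basis) (use U xX in blast)
  moreover have "x \<in> uapp U {x}"
    using uniform_structure_refl[OF us U] xX by (auto simp: uapp_def)
  ultimately have "eventually_net D leq (\<lambda>b. u b \<in> uapp U {x})"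
    using conv unfolding net_converges_iff_eventually by blast
  then show "eventually_net D leq (\<lambda>b. (u b, x) \<in> U)"
    by (rule eventually_net_mono) (simp add: uapp_def)
qed

text \<open>An equicontinuous action preserves S-asymptoticity: moving both nets by
  the same group elements keeps them eventually U-close, because the set of
  pairs kept U-close by every group element is itself an entourage.\<close>
lemma equicontinuous_action_asymptotic:
  assumes eq: "equicontinuous_action G \<phi> X S"
    and gs: "\<forall>a\<in>D. gs a \<in> carrier G"
    and asym: "asymptotic_nets S D leq u v"
  shows "asymptotic_nets S D leq (\<lambda>a. \<phi> (gs a) (u a)) (\<lambda>a. \<phi> (gs a) (v a))"
  unfolding asymptotic_nets_def
proof
  fix U assume "U \<in> S"
  then have "{(p, q) \<in> X \<times> X. \<forall>g\<in>carrier G. (\<phi> g p, \<phi> g q) \<in> U} \<in> S"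
    using eq unfolding equicontinuous_action_def by blast
  then have "eventually_net D leq
      (\<lambda>b. (u b, v b) \<in> {(p, q) \<in> X \<times> X. \<forall>g\<in>carrier G. (\<phi> g p, \<phi> g q) \<in> U})"
    using asym unfolding asymptotic_nets_def by blast
  then show "eventually_net D leq (\<lambda>b. (\<phi> (gs b) (u b), \<phi> (gs b) (v b)) \<in> U)"
    by (rule eventually_net_mono) (use gs in blast)
qed

lemma S_compatible_asymptotic_converges:
  assumes dir: "directed_set D leq"
    and comp: "S_compatible X S T"
    and asym: "asymptotic_nets S D leq u v"
    and conv: "net_converges T D leq v y"
  shows "net_converges T D leq u y"
  unfolding net_converges_iff_eventually
proof (intro conjI allI impI)
  show "y \<in> topspace T" using conv unfolding net_converges_def by simp
next
  fix V assume V: "openin T V \<and> y \<in> V"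
  then obtain V' U where V': "openin T V'" "y \<in> V'" "U \<in> S" "uapp U V' \<subseteq> V"
    using comp unfolding S_compatible_def by blast
  have "eventually_net D leq (\<lambda>b. v b \<in> V')"
    using conv V' unfolding net_converges_iff_eventually by blast
  moreover have "eventually_net D leq (\<lambda>b. (u b, v b) \<in> U)"
    using asym V'(3) unfolding asymptotic_nets_def by blast
  ultimately have "eventually_net D leq (\<lambda>b. v b \<in> V' \<and> (u b, v b) \<in> U)"
    by (rule eventually_net_conj[OF dir])
  then show "eventually_net D leq (\<lambda>b. u b \<in> V)"
    by (rule eventually_net_mono) (use V'(4) in \<open>auto simp: uapp_def\<close>)
qed

theorem lemma2p7:
  fixes G :: "('g, 'b) monoid_scheme" and \<phi> :: "'g \<Rightarrow> 'a \<Rightarrow> 'a"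
    and X :: "'a set" and S :: "('a \<times> 'a) set set" and T :: "'a topology"
    and D :: "'i set" and leq :: "'i \<Rightarrow> 'i \<Rightarrow> bool"
    and xs :: "'i \<Rightarrow> 'a" and gs :: "'i \<Rightarrow> 'g" and x y :: 'a
  assumes "group G"
    and "group_action G X \<phi>"
    and "uniform_structure X S"
    and "equicontinuous_action G \<phi> X S"
    and "S_compatible X S T"
    and "directed_set D leq"
    and "\<forall>a\<in>D. xs a \<in> X"
    and "net_converges (uniform_topology X S) D leq xs x"
    and "\<forall>a\<in>D. gs a \<in> carrier G"
    and "y \<in> X"
  shows "net_converges T D leq (\<lambda>a. \<phi> (gs a) (xs a)) y \<longleftrightarrow>
         net_converges T D leq (\<lambda>a. \<phi> (gs a) x) y"
proof -
  have "asymptotic_nets S D leq xs (\<lambda>_. x)"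
    using assms(3,8) by (rule uniform_topology_convergence_asymptotic)
  then have asym: "asymptotic_nets S D leq (\<lambda>a. \<phi> (gs a) (xs a)) (\<lambda>a. \<phi> (gs a) x)"
    using assms(4,9) equicontinuous_action_asymptotic by fastforce
  moreover have "asymptotic_nets S D leq (\<lambda>a. \<phi> (gs a) x) (\<lambda>a. \<phi> (gs a) (xs a))"
    using assms(3) asym by (rule asymptotic_nets_sym)
  ultimately show ?thesis
    using S_compatible_asymptotic_converges[OF assms(6,5)] by blast
qed

end
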